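(* Let $(X,e,\mu)$ be an $\mathrm{NP}_2$-digital H-space with $X$ $\mathrm{NP}_2$-irreducible. Then $\{e\}$ is a connected component of $X$, so $X=\{e\}\sqcup Z$ with $Z=X\setminus\{e\}$, and there exist an $\mathrm{NP}_2$-continuous map $\tau:Z\times Z\to Z$ and a subset $A\subseteq Z\times Z$ which is a union of connected components of $Z\times Z$ (with the $\mathrm{NP}_2$ adjacency) such that for all $x,y\in X$: $\mu(x,y)=\tau(x,y)$ if $(x,y)\in A$; $\mu(x,y)=x$ if $y=e$; $\mu(x,y)=y$ if $x=e$; and $\mu(x,y)=e$ otherwise. In particular $e$ is a two-sided unit for $\mu$.
   Context: A digital image is a finite set with a reflexive symmetric adjacency relation (a finite reflexive graph); continuous maps send adjacent points to adjacent points. On products, $\mathrm{NP}_2$ declares two tuples adjacent iff coordinates are adjacent in at most 2 positions and equal elsewhere. An $\mathrm{NP}_2$-homotopy from $f$ to $g:X\to Y$ is an $\mathrm{NP}_2$-continuous $H:X\times[0,m]_{\mathbb{Z}}\to Y$ with $H(\cdot,0)=f$, $H(\cdot,m)=g$; write $f\simeq_2 g$. $X$ is $\mathrm{NP}_2$-irreducible if it is not $\mathrm{NP}_2$-homotopy equivalent to a digital image with fewer points. An $\mathrm{NP}_2$-digital H-space is $(X,e,\mu)$ with $\mu:X\times X\to X$ $\mathrm{NP}_2$-continuous, $\mu\circ(\mathrm{id}_X,c_e)\simeq_2\mathrm{id}_X$, $\mu\circ(c_e,\mathrm{id}_X)\simeq_2\mathrm{id}_X$, where $(f,g)(x)=(f(x),g(x))$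 and $c_e$ is constant at $e$ (homotopies need not be pointed). *)

theory Defs
  imports Main
begin

definition digital_image :: "'a set \<Rightarrow> ('a \<Rightarrow> 'a \<Rightarrow> bool) \<Rightarrow> bool" where
  "digital_image X adj \<longleftrightarrow> finite X \<and> (\<forall>x\<in>X. adj x x) \<and>
     (\<forall>x\<in>X. \<forall>y\<in>X. adj x y \<longrightarrow> adj y x)"

definition np2 :: "('a \<Rightarrow> 'a \<Rightarrow> bool) \<Rightarrow> ('b \<Rightarrow> 'b \<Rightarrow> bool) \<Rightarrow> 'a \<times> 'b \<Rightarrow> 'a \<times> 'b \<Rightarrow> bool" where
  "np2 adjX adjY p q \<longleftrightarrow> (fst p = fst q \<or> adjX (fst p) (fst q)) \<and> (snd p = snd q \<or> adjY (snd p) (snd q))"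

definition int_adj :: "int \<Rightarrow> int \<Rightarrow> bool" where
  "int_adj a b \<longleftrightarrow> \<bar>a - b\<bar> \<le> 1"

definition dcont :: "'a set \<Rightarrow> ('a \<Rightarrow> 'a \<Rightarrow> bool) \<Rightarrow> 'b set \<Rightarrow> ('b \<Rightarrow> 'b \<Rightarrow> bool) \<Rightarrow> ('a \<Rightarrow> 'b) \<Rightarrow> bool" where
  "dcont X adjX Y adjY f \<longleftrightarrow> (\<forall>x\<in>X. f x \<in> Y) \<and>
     (\<forall>x\<in>X. \<forall>x'\<in>X. adjX x x' \<longrightarrow> adjY (f x) (f x'))"

text \<open>NP_2-homotopy f \<simeq>_2 g : X \<rightarrow> Y (not necessarily pointed).\<close>
definition np2_homotopic :: "'a set \<Rightarrow> ('a \<Rightarrow> 'a \<Rightarrow> bool) \<Rightarrow> 'b set \<Rightarrow> ('b \<Rightarrow> 'b \<Rightarrow> bool)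
    \<Rightarrow> ('a \<Rightarrow> 'b) \<Rightarrow> ('a \<Rightarrow> 'b) \<Rightarrow> bool" where
  "np2_homotopic X adjX Y adjY f g \<longleftrightarrow>
     (\<exists>m::nat. \<exists>H :: 'a \<times> int \<Rightarrow> 'b.
        dcont (X \<times> {0..int m}) (np2 adjX int_adj) Y adjY H \<and>
        (\<forall>x\<in>X. H (x, 0) = f x \<and> H (x, int m) = g x))"

definition np2_htpy_equiv :: "'a set \<Rightarrow> ('a \<Rightarrow> 'a \<Rightarrow> bool) \<Rightarrow> 'b set \<Rightarrow> ('b \<Rightarrow> 'b \<Rightarrow> bool) \<Rightarrow> bool" where
  "np2_htpy_equiv X adjX Y adjY \<longleftrightarrow>
     (\<exists>f g. dcont X adjX Y adjY f \<and> dcont Y adjY X adjX g \<and>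
        np2_homotopic X adjX X adjX (g \<circ> f) id \<and>
        np2_homotopic Y adjY Y adjY (f \<circ> g) id)"

text \<open>Competitor images range over the same element type; since a smaller finite
image can always be injectively relabelled into the type of X, this loses nothing.\<close>
definition np2_irreducible :: "'a set \<Rightarrow> ('a \<Rightarrow> 'a \<Rightarrow> bool) \<Rightarrow> bool" where
  "np2_irreducible X adj \<longleftrightarrow>
     \<not> (\<exists>(Y :: 'a set) adjY. digital_image Y adjY \<and> card Y < card X \<and>
          np2_htpy_equiv X adj Y adjY)"

definition np2_hspace :: "'a set \<Rightarrow> ('a \<Rightarrow> 'a \<Rightarrow> bool) \<Rightarrow> 'a \<Rightarrow> ('a \<times> 'a \<Rightarrow> 'a) \<Rightarrow> bool" where
  "np2_hspace X adj e mu \<longleftrightarrow> digital_image X adj \<and> e \<in> X \<and>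
     dcont (X \<times> X) (np2 adj adj) X adj mu \<and>
     np2_homotopic X adj X adj (\<lambda>x. mu (x, e)) id \<and>
     np2_homotopic X adj X adj (\<lambda>x. mu (e, x)) id"

definition dcomp :: "'a set \<Rightarrow> ('a \<Rightarrow> 'a \<Rightarrow> bool) \<Rightarrow> 'a \<Rightarrow> 'a set" where
  "dcomp X adj x = {y. (x, y) \<in> {(a, b). a \<in> X \<and> b \<in> X \<and> adj a b}\<^sup>*}"

end

theory Submission
  imports Defs
begin

text \<open>In an irreducible image no point is dominated by another one: deleting a dominated
point would be a homotopy equivalence onto a smaller image. Consequently a map that
dominates the identity pointwise is the identity, and running down a homotopy to the
identity one step at a time shows that it is constant. Applied to the unit homotopies of
an H-space this makes e a strict two-sided unit, and then a neighbour a of e gives the map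
\<mu>(-, a), which dominates \<mu>(-, e) = id, so a = \<mu>(e, a) = e. Hence e is isolated, and
\<mu> = e is a union of components of (X - {e}) \<times> (X - {e}).\<close>

definition dominates :: "'a set \<Rightarrow> ('a \<Rightarrow> 'a \<Rightarrow> bool) \<Rightarrow> 'a \<Rightarrow> 'a \<Rightarrow> bool" where
  "dominates X adj y x \<longleftrightarrow> (\<forall>z\<in>X. adj x z \<longrightarrow> adj y z)"

lemma digital_image_refl: "digital_image X adj \<Longrightarrow> x \<in> X \<Longrightarrow> adj x x"
  by (simp add: digital_image_def)

lemma digital_image_sym:
  "digital_image X adj \<Longrightarrow> x \<in> X \<Longrightarrow> y \<in> X \<Longrightarrow> adj x y \<Longrightarrow> adj y x"
  by (simp add: digital_image_def)

lemma digital_image_subset: "digital_image X adj \<Longrightarrow> Y \<subseteq> X \<Longrightarrow> digital_image Y adj"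
  by (auto simp: digital_image_def intro: finite_subset)

lemma dcont_subset_domain:
  "dcont X adjX Y adjY f \<Longrightarrow> S \<subseteq> X \<Longrightarrow> dcont S adjX Y adjY f"
  by (auto simp: dcont_def)

lemma np2_homotopic_if_close:
  assumes X: "digital_image X adjX" and Y: "digital_image Y adjY"
    and f: "dcont X adjX Y adjY f" and g: "dcont X adjX Y adjY g"
    and close: "\<And>x x'. x \<in> X \<Longrightarrow> x' \<in> X \<Longrightarrow> adjX x x' \<Longrightarrow> adjY (f x) (g x')"
  shows "np2_homotopic X adjX Y adjY f g"
proof -
  define H where "H = (\<lambda>(x, t::int). if t = 0 then f x else g x)"
  have close': "adjY (g x) (f x')" if "x \<in> X" "x' \<in> X" "adjX x x'" for x x'
    using that close[of x' x] digital_image_sym[OF X] digital_image_sym[OF Y] f g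
    by (auto simp: dcont_def)
  have "adjY (H p) (H q)"
    if p: "p \<in> X \<times> {0..1}" and q: "q \<in> X \<times> {0..1}" and pq: "np2 adjX int_adj p q" for p q
  proof -
    obtain x s x' t where pq_eq: "p = (x, s)" "q = (x', t)" by (cases p, cases q)
    then have xx': "x \<in> X" "x' \<in> X" "adjX x x'"
      using p q pq digital_image_refl[OF X] by (auto simp: np2_def)
    then show ?thesis
      using f g close close' p q unfolding pq_eq H_def dcont_def by auto
  qed
  then have "dcont (X \<times> {0..int 1}) (np2 adjX int_adj) Y adjY H"
    using f g by (auto simp: dcont_def H_def)
  moreover have "\<forall>x\<in>X. H (x, 0) = f x \<and> H (x, int 1) = g x"
    by (simp add: H_def)
  ultimately show ?thesis
    unfolding np2_homotopic_def by blast
qed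

lemma np2_htpy_equiv_delete_dominated:
  assumes X: "digital_image X adj" and "x \<in> X" "y \<in> X" "y \<noteq> x"
    and dom: "dominates X adj y x"
  shows "np2_htpy_equiv X adj (X - {x}) adj"
proof -
  define r where "r = (\<lambda>a. if a = x then y else a)"
  have rX: "r a \<in> X - {x}" if "a \<in> X" for a
    using that assms by (auto simp: r_def)
  have r_close: "adj (r a) a'" if "a \<in> X" "a' \<in> X" "adj a a'" for a a'
    using that dom by (auto simp: r_def dominates_def)
  have "adj (r a) (r a')" if "a \<in> X" "a' \<in> X" "adj a a'" for a a'
    using that rX r_close digital_image_sym[OF X] by (metis Diff_iff)
  then have r: "dcont X adj (X - {x}) adj r"
    using rX by (simp add: dcont_def)
  have incl: "dcont (X - {x}) adj X adj id"
    by (simp add: dcont_def)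
  have "np2_homotopic X adj X adj (id \<circ> r) id"
    using X r r_close by (intro np2_homotopic_if_close) (auto simp: dcont_def)
  moreover have "np2_homotopic (X - {x}) adj (X - {x}) adj (r \<circ> id) id"
    using digital_image_subset[OF X] digital_image_sym[OF X]
    by (intro np2_homotopic_if_close) (auto simp: dcont_def r_def)
  ultimately show ?thesis
    unfolding np2_htpy_equiv_def using r incl by blast
qed

lemma np2_irreducible_dominates_eq:
  assumes X: "digital_image X adj" and irr: "np2_irreducible X adj"
    and "x \<in> X" "y \<in> X" and "dominates X adj y x"
  shows "y = x"
proof (rule ccontr)
  assume "y \<noteq> x"
  then have "np2_htpy_equiv X adj (X - {x}) adj"
    using np2_htpy_equiv_delete_dominated[OF X _ _ _ assms(5)] assms(3,4) by simp
  moreover have "card (X - {x}) < card X"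
    using X \<open>x \<in> X\<close> by (intro card_Diff1_less) (simp_all add: digital_image_def)
  moreover have "digital_image (X - {x}) adj"
    using digital_image_subset[OF X] by blast
  ultimately show False
    using irr unfolding np2_irreducible_def by blast
qed

lemma np2_irreducible_homotopic_id_eq:
  assumes X: "digital_image X adj" and irr: "np2_irreducible X adj"
    and "np2_homotopic X adj X adj f id" and "x \<in> X"
  shows "f x = x"
proof -
  obtain m H where H: "dcont (X \<times> {0..int m}) (np2 adj int_adj) X adj H"
    and ends: "\<forall>x\<in>X. H (x, 0) = f x \<and> H (x, int m) = x"
    using assms(3) unfolding np2_homotopic_def by auto
  have "\<forall>x\<in>X. H (x, int m - int k) = x" if "k \<le> m" for k
    using that
  proof (induction k)
    case 0
    then show ?case using ends by simp
  next
    case (Suc k)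
    show ?case
    proof
      fix x assume x: "x \<in> X"
      let ?t = "int m - int (Suc k)"
      have "adj (H (x, ?t)) (H (z, ?t + 1))" if "z \<in> X" "adj x z" for z
        using H x that Suc.prems by (auto simp: dcont_def np2_def int_adj_def)
      then have "dominates X adj (H (x, ?t)) x"
        using Suc by (auto simp: dominates_def)
      moreover have "H (x, ?t) \<in> X"
        using H x Suc.prems by (auto simp: dcont_def)
      ultimately show "H (x, ?t) = x"
        using np2_irreducible_dominates_eq[OF X irr x] by blast
    qed
  qed
  then show ?thesis
    using ends \<open>x \<in> X\<close> by (metis diff_self order_refl)
qed

lemma np2_hspace_unit:
  assumes H: "np2_hspace X adj e mu" and irr: "np2_irreducible X adj" and "x \<in> X"
  shows "mu (x, e) = x" and "mu (e, x) = x"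
  using assms np2_irreducible_homotopic_id_eq[of X adj]
  by (auto simp: np2_hspace_def)

lemma np2_hspace_unit_isolated:
  assumes H: "np2_hspace X adj e mu" and irr: "np2_irreducible X adj"
    and a: "a \<in> X" "adj e a"
  shows "a = e"
proof -
  from H have X: "digital_image X adj" and e: "e \<in> X"
    and mu: "dcont (X \<times> X) (np2 adj adj) X adj mu"
    by (auto simp: np2_hspace_def)
  have "adj a e"
    using digital_image_sym[OF X e a(1) a(2)] .
  then have "adj (mu (e, a)) (mu (z, e))" if "z \<in> X" "adj e z" for z
    using mu e a that by (auto simp: dcont_def np2_def)
  then have "dominates X adj (mu (e, a)) e"
    using np2_hspace_unit(1)[OF H irr] by (auto simp: dominates_def)
  moreover have "mu (e, a) \<in> X"
    using mu e a by (auto simp: dcont_def)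
  ultimately have "mu (e, a) = e"
    using np2_irreducible_dominates_eq[OF X irr e] by blast
  then show ?thesis
    using np2_hspace_unit(2)[OF H irr a(1)] by simp
qed

lemma dcomp_subset_closed:
  assumes "x \<in> S"
    and closed: "\<And>a b. a \<in> S \<Longrightarrow> a \<in> X \<Longrightarrow> b \<in> X \<Longrightarrow> adj a b \<Longrightarrow> b \<in> S"
  shows "dcomp X adj x \<subseteq> S"
proof
  fix y assume "y \<in> dcomp X adj x"
  then have "(x, y) \<in> {(a, b). a \<in> X \<and> b \<in> X \<and> adj a b}\<^sup>*"
    by (simp add: dcomp_def)
  then show "y \<in> S"
    by (induction rule: rtrancl_induct) (use assms in auto)
qed

lemma dcomp_isolated:
  assumes "\<And>a. a \<in> X \<Longrightarrow> adj x a \<Longrightarrow> a = x"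
  shows "dcomp X adj x = {x}"
  using dcomp_subset_closed[of x "{x}" X adj] assms by (auto simp: dcomp_def)

lemma dcont_isolated_value_iff:
  assumes Y: "digital_image Y adjY" and f: "dcont S adjS Y adjY f"
    and iso: "\<And>a. a \<in> Y \<Longrightarrow> adjY e a \<Longrightarrow> a = e"
    and "p \<in> S" "q \<in> S" "adjS p q"
  shows "f p = e \<longleftrightarrow> f q = e"
  using assms digital_image_sym[OF Y, of "f p" "f q"] by (auto simp: dcont_def)

lemma dcomp_subset_off_isolated:
  assumes Y: "digital_image Y adjY" and f: "dcont S adjS Y adjY f"
    and iso: "\<And>a. a \<in> Y \<Longrightarrow> adjY e a \<Longrightarrow> a = e"
    and "p \<in> S" "f p \<noteq> e"
  shows "dcomp S adjS p \<subseteq> {q \<in> S. f q \<noteq> e}"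
  using assms dcont_isolated_value_iff[OF Y f iso]
  by (intro dcomp_subset_closed) auto

lemma dcont_redirect_isolated:
  assumes Y: "digital_image Y adjY" and f: "dcont S adjS Y adjY f"
    and iso: "\<And>a. a \<in> Y \<Longrightarrow> adjY e a \<Longrightarrow> a = e"
    and z: "z \<in> Y" "z \<noteq> e"
  shows "dcont S adjS (Y - {e}) adjY (\<lambda>p. if f p = e then z else f p)"
  using f z dcont_isolated_value_iff[OF Y f iso] digital_image_refl[OF Y z(1)]
  by (auto simp: dcont_def)

theorem mainTheorem16:
  fixes X :: "'a set" and adj :: "'a \<Rightarrow> 'a \<Rightarrow> bool" and e :: 'a
    and mu :: "'a \<times> 'a \<Rightarrow> 'a"
  assumes "np2_hspace X adj e mu"
    and "np2_irreducible X adj"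
  shows "dcomp X adj e = {e} \<and>
    (\<exists>(\<tau> :: 'a \<times> 'a \<Rightarrow> 'a) (A :: ('a \<times> 'a) set).
       dcont ((X - {e}) \<times> (X - {e})) (np2 adj adj) (X - {e}) adj \<tau> \<and>
       A \<subseteq> (X - {e}) \<times> (X - {e}) \<and>
       (\<forall>p\<in>A. dcomp ((X - {e}) \<times> (X - {e})) (np2 adj adj) p \<subseteq> A) \<and>
       (\<forall>x\<in>X. \<forall>y\<in>X. mu (x, y) =
          (if (x, y) \<in> A then \<tau> (x, y)
           else if y = e then x
           else if x = e then y
           else e))) \<and>
    (\<forall>x\<in>X. mu (x, e) = x \<and> mu (e, x) = x)"
proof -
  define Z where "Z = X - {e}"
  define A where "A = {p \<in> Z \<times> Z. mu p \<noteq> e}"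
  define \<tau> where "\<tau> = (\<lambda>p. if mu p = e then (SOME z. z \<in> Z) else mu p)"
  from assms(1) have X: "digital_image X adj"
    and mu: "dcont (Z \<times> Z) (np2 adj adj) X adj mu"
    unfolding np2_hspace_def Z_def by (auto intro: dcont_subset_domain)
  note iso = np2_hspace_unit_isolated[OF assms]
  note unit = np2_hspace_unit[OF assms]
  have "dcont (Z \<times> Z) (np2 adj adj) Z adj \<tau>"
  proof (cases "Z = {}")
    case False
    then have "(SOME z. z \<in> Z) \<in> Z" by (simp add: some_in_eq)
    then show ?thesis
      using dcont_redirect_isolated[OF X mu iso] unfolding \<tau>_def Z_def by simp
  qed (simp add: dcont_def)
  moreover have "\<forall>p\<in>A. dcomp (Z \<times> Z) (np2 adj adj) p \<subseteq> A"
    using dcomp_subset_off_isolated[OF X mu iso] unfolding A_def by blast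
  moreover have "\<forall>x\<in>X. \<forall>y\<in>X. mu (x, y) =
      (if (x, y) \<in> A then \<tau> (x, y) else if y = e then x else if x = e then y else e)"
    using unit by (auto simp: A_def \<tau>_def Z_def)
  ultimately show ?thesis
    using dcomp_isolated[of X adj e] iso unit unfolding Z_def
    by (intro conjI exI[of _ \<tau>] exI[of _ A]) (auto simp: A_def Z_def)
qed

end
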